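(* Let $p$ be a prime and let $\widetilde{\mathcal{C}}$ be an $[n+k,n+k-m]$ linear code over $\mathbb{F}_p$ with parity check matrix $\widetilde{H}\in\mathbb{F}_p^{m\times(n+k)}$ (so $\widetilde{\mathcal{C}}^\perp$ is the row space of $\widetilde{H}$) of the form $$\widetilde{H} = \begin{pmatrix} -\mathbb{1}_k & \operatorname{H}_1\\ 0 & \operatorname{H}_0\end{pmatrix},$$ where $\mathbb{1}_k$ is the $k\times k$ identity and $\operatorname{H}_1\in\mathbb{F}_p^{k\times n}$, $\operatorname{H}_0\in\mathbb{F}_p^{(m-k)\times n}$. Suppose $\widetilde{\mathcal{C}}^\perp$ is triply-even and contains the all-ones vector. Then the matrix $\operatorname{H} = \begin{pmatrix}\operatorname{H}_1\\ \operatorname{H}_0\end{pmatrix}$, with rows $h^1,\dots,h^m$ (the first $k$ being the rows of $\operatorname{H}_1$), is tri-orthogonal. Furthermore, for all $1\le a\le k$, $\epsilon_a := \sum_i (h^a_i)^3 = 1\pmod p$ and $\sum_i (h^a_i)^2 = -1\pmod p$.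
   Context: A subspace $\mathcal{V}\subseteq\mathbb{F}_p^N$ is triply-even if $\sum_i u_iv_iw_i = 0\pmod p$ for all $u,v,w\in\mathcal{V}$. A matrix with rows $h^1,\dots,h^m\in\mathbb{F}_p^n$ is tri-orthogonal if $\sum_i h^a_ih^b_i = 0\pmod p$ for all $1\le a<b\le m$ and $\sum_i h^a_ih^b_ih^c_i = 0\pmod p$ for all $1\le a<b<c\le m$. *)

theory Defs
  imports Main "HOL-Computational_Algebra.Primes"
begin

text \<open>Vectors in F^N are functions nat => 'a, with coordinates 0..N-1 (zero outside).
  Matrices with r rows and N columns are functions nat => nat => 'a, row index first.\<close>

definition row_space :: "nat \<Rightarrow> nat \<Rightarrow> (nat \<Rightarrow> nat \<Rightarrow> 'a::field) \<Rightarrow> (nat \<Rightarrow> 'a) set" where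
  "row_space r N M = {(\<lambda>i. if i < N then (\<Sum>j<r. c j * M j i) else 0) | c. True}"

definition triply_even :: "nat \<Rightarrow> (nat \<Rightarrow> 'a::field) set \<Rightarrow> bool" where
  "triply_even N V \<longleftrightarrow> (\<forall>u\<in>V. \<forall>v\<in>V. \<forall>w\<in>V. (\<Sum>i<N. u i * v i * w i) = 0)"

definition tri_orthogonal :: "nat \<Rightarrow> nat \<Rightarrow> (nat \<Rightarrow> nat \<Rightarrow> 'a::field) \<Rightarrow> bool" where
  "tri_orthogonal r n h \<longleftrightarrow>
     (\<forall>a b. a < b \<and> b < r \<longrightarrow> (\<Sum>i<n. h a i * h b i) = 0) \<and>
     (\<forall>a b c. a < b \<and> b < c \<and> c < r \<longrightarrow> (\<Sum>i<n. h a i * h b i * h c i) = 0)"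

definition ones_vec :: "nat \<Rightarrow> nat \<Rightarrow> 'a::field" where
  "ones_vec N = (\<lambda>i. if i < N then 1 else 0)"

text \<open>The block matrix (-1_k  H1 ; 0  H0) of size m x (n+k), where H (m x n) has rows
  H1 (rows 0..k-1) stacked over H0 (rows k..m-1).\<close>
definition tilde_H :: "nat \<Rightarrow> (nat \<Rightarrow> nat \<Rightarrow> 'a::field) \<Rightarrow> nat \<Rightarrow> nat \<Rightarrow> 'a" where
  "tilde_H k H = (\<lambda>j i. if i < k then (if i = j then -1 else 0) else H j (i - k))"

definition rows_lin_indep :: "nat \<Rightarrow> nat \<Rightarrow> (nat \<Rightarrow> nat \<Rightarrow> 'a::field) \<Rightarrow> bool" where
  "rows_lin_indep r N M \<longleftrightarrow>
     (\<forall>c. (\<forall>i<N. (\<Sum>j<r. c j * M j i) = 0) \<longrightarrow> (\<forall>j<r. c j = 0))"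

end

theory Submission
  imports Defs
begin

text \<open>Each row of \<open>tilde_H k H\<close> lies in the triply-even space, so the sum of the products
  of any three rows vanishes; taking the all-ones vector as third factor, so does the sum of
  the products of any two rows. Splitting such a sum into the first \<open>k\<close> coordinates, where
  only the block \<open>-1\<^sub>k\<close> contributes, and the last \<open>n\<close>, where the rows of \<open>H\<close> appear,
  gives the tri-orthogonality of \<open>H\<close> for distinct rows and the values \<open>1\<close> and \<open>-1\<close> for the
  diagonal sums of the first \<open>k\<close> rows.\<close>

lemma sum_lessThan_add_split:
  fixes n k :: nat
  shows "(\<Sum>i<n + k. f i) = (\<Sum>i<k. f i) + (\<Sum>i<n. f (i + k))"
  by (induction n) (auto simp: add.assoc add.commute add.left_commute)

lemma row_mem_row_space:
  fixes M :: "nat \<Rightarrow> nat \<Rightarrow> 'a::field"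
  assumes "a < r"
  shows "(\<lambda>i. if i < N then M a i else 0) \<in> row_space r N M"
proof -
  have coeff: "(\<Sum>j<r. (if j = a then 1 else 0) * M j i) = M a i" for i
    using assms by (simp add: if_distrib[of "\<lambda>x. x * _"] cong: if_cong)
  have "(\<lambda>i. if i < N then M a i else 0)
      = (\<lambda>i. if i < N then (\<Sum>j<r. (if j = a then 1 else 0) * M j i) else 0)"
    unfolding coeff ..
  then show ?thesis
    unfolding row_space_def by (intro CollectI exI[of _ "\<lambda>j. if j = a then 1 else 0"]) simp
qed

lemma triply_evenD:
  assumes "triply_even N V" and "u \<in> V" and "v \<in> V" and "w \<in> V"
  shows "(\<Sum>i<N. u i * v i * w i) = 0"
  using assms unfolding triply_even_def by blast

lemma triply_even_self_orthogonal:
  assumes "triply_even N V" and "ones_vec N \<in> V" and "u \<in> V" and "v \<in> V"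
  shows "(\<Sum>i<N. u i * v i) = 0"
proof -
  have "(\<Sum>i<N. u i * v i * ones_vec N i) = 0"
    using assms by (intro triply_evenD)
  then show ?thesis
    by (simp add: ones_vec_def)
qed

lemma triply_even_row_space_triple_product:
  assumes "triply_even N (row_space r N M)" and "a < r" and "b < r" and "c < r"
  shows "(\<Sum>i<N. M a i * M b i * M c i) = 0"
proof -
  let ?row = "\<lambda>a i. if i < N then M a i else 0"
  have "(\<Sum>i<N. M a i * M b i * M c i) = (\<Sum>i<N. ?row a i * ?row b i * ?row c i)"
    by simp
  also have "\<dots> = 0"
    by (rule triply_evenD[OF assms(1) row_mem_row_space[OF assms(2)]
          row_mem_row_space[OF assms(3)] row_mem_row_space[OF assms(4)]])
  finally show ?thesis .
qed

lemma triply_even_row_space_pair_product: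
  assumes "triply_even N (row_space r N M)" and "ones_vec N \<in> row_space r N M"
    and "a < r" and "b < r"
  shows "(\<Sum>i<N. M a i * M b i) = 0"
proof -
  let ?row = "\<lambda>a i. if i < N then M a i else 0"
  have "(\<Sum>i<N. M a i * M b i) = (\<Sum>i<N. ?row a i * ?row b i)"
    by simp
  also have "\<dots> = 0"
    by (rule triply_even_self_orthogonal[OF assms(1,2) row_mem_row_space[OF assms(3)]
          row_mem_row_space[OF assms(4)]])
  finally show ?thesis .
qed

lemma tilde_H_pair_product:
  "(\<Sum>i<n + k. tilde_H k H a i * tilde_H k H b i)
     = (if a = b \<and> a < k then 1 else 0) + (\<Sum>i<n. H a i * H b i)"
proof -
  have "(\<Sum>i<k. tilde_H k H a i * tilde_H k H b i)
      = (\<Sum>i<k. if i = a then (if a = b then 1 else 0) else 0)"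
    by (rule sum.cong) (auto simp: tilde_H_def)
  then show ?thesis
    by (simp add: sum_lessThan_add_split tilde_H_def)
qed

lemma tilde_H_triple_product:
  "(\<Sum>i<n + k. tilde_H k H a i * tilde_H k H b i * tilde_H k H c i)
     = (if a = b \<and> b = c \<and> a < k then -1 else 0) + (\<Sum>i<n. H a i * H b i * H c i)"
proof -
  have "(\<Sum>i<k. tilde_H k H a i * tilde_H k H b i * tilde_H k H c i)
      = (\<Sum>i<k. if i = a then (if a = b \<and> b = c then -1 else 0) else 0)"
    by (rule sum.cong) (auto simp: tilde_H_def)
  then show ?thesis
    by (simp add: sum_lessThan_add_split tilde_H_def)
qed

lemma tilde_H_rows_pair_sum:
  assumes "triply_even (n + k) (row_space m (n + k) (tilde_H k H))"
    and "ones_vec (n + k) \<in> row_space m (n + k) (tilde_H k H)"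
    and "a < m" and "b < m"
  shows "(\<Sum>i<n. H a i * H b i) = (if a = b \<and> a < k then -1 else 0)"
proof -
  have "(if a = b \<and> a < k then 1 else 0) + (\<Sum>i<n. H a i * H b i) = 0"
    using triply_even_row_space_pair_product[OF assms] unfolding tilde_H_pair_product .
  then show ?thesis
    by (simp add: add_eq_0_iff)
qed

lemma tilde_H_rows_triple_sum:
  assumes "triply_even (n + k) (row_space m (n + k) (tilde_H k H))"
    and "a < m" and "b < m" and "c < m"
  shows "(\<Sum>i<n. H a i * H b i * H c i) = (if a = b \<and> b = c \<and> a < k then 1 else 0)"
proof -
  have "(if a = b \<and> b = c \<and> a < k then -1 else 0) + (\<Sum>i<n. H a i * H b i * H c i) = 0"
    using triply_even_row_space_triple_product[OF assms] unfolding tilde_H_triple_product .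
  then show ?thesis
    by (simp add: add_eq_0_iff)
qed

theorem lemma4:
  fixes p :: nat and n k m :: nat and H :: "nat \<Rightarrow> nat \<Rightarrow> 'a::{finite,field}"
  assumes "prime p" and "card (UNIV :: 'a set) = p"
    and "k \<le> m"
    and "rows_lin_indep m (n + k) (tilde_H k H)"
    and "triply_even (n + k) (row_space m (n + k) (tilde_H k H))"
    and "ones_vec (n + k) \<in> row_space m (n + k) (tilde_H k H)"
  shows "tri_orthogonal m n H \<and>
    (\<forall>a<k. (\<Sum>i<n. H a i ^ 3) = 1 \<and> (\<Sum>i<n. H a i ^ 2) = -1)"
proof -
  note pair = tilde_H_rows_pair_sum[OF assms(5,6)]
  note triple = tilde_H_rows_triple_sum[OF assms(5)]
  have "tri_orthogonal m n H"
    unfolding tri_orthogonal_def using pair triple by auto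
  moreover have "(\<Sum>i<n. H a i ^ 3) = 1 \<and> (\<Sum>i<n. H a i ^ 2) = -1" if "a < k" for a
    using that \<open>k \<le> m\<close> by (simp add: pair triple power2_eq_square power3_eq_cube)
  ultimately show ?thesis
    by blast
qed

end
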